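(* Let $A$ be any implementable allocation rule. Let $\pi_i : \mathcal V_i \to [0,\infty)$, $i = 1,\dots,n$, be measurable functions, and let $P^*$ be the payment rule in which a bidder $i$ with the largest value of $\pi_i(v_i)$ (ties broken by an arbitrary fixed rule) pays $\pi_i(v_i)$ and all other bidders pay $0$. If $P^*$ satisfies revenue equivalence, i.e. $\mathbb E[P_i^*(\bm v) \mid v_i] = z_i(v_i)$ for all $i, v_i$, then for every convex $g : \mathbb R \to \mathbb R$ and every (non-negative) payment rule $P$ implementing $A$, $\mathbb E[g(\sum_i P_i^*(\bm v))] \le \mathbb E[g(\sum_i P_i(\bm v))]$ (whenever these expectations exist).
   Context: Setting: $n$ risk-neutral unit-demand bidders and $k$ identical items, $1 \le k < n$. Bidder $i$ has private value $v_i \in \mathcal V_i = [0,\bar v_i]$, drawn independently across bidders from a distribution $F_i$ with density $f_i > 0$ on $\mathcal V_i$ (distributions may differ across bidders); $\bm v = (v_1,\dots,v_n)$, $\mathcal V = \prod_i \mathcal V_i$. An allocation rule is a measurable map $A : \mathcal V \to \{0,1\}^n$ with $\sum_i A_i(\bm v) \le k$. Its interim allocation is $x_i(v_i) = \mathbb E[A_i(\bm v) \mid v_i]$, and $A$ is called implementable if every $x_i$ is non-decreasing. Its interim payment function is $z_i(v_i) = v_i x_i(v_i) - \int_0^{v_i} x_i(u)\,du$. A payment rule is a measurable map $P : \mathcal V \to [0,\infty)^n$ (payments are non-negative). $P$ implements $A$ if $(A,P)$ is Bayesian incentive compatible, i.e. $\mathbb E[v_i A_i(\bm v) - P_i(\bm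 v) \mid v_i] \ge \mathbb E[v_i A_i(v_i',\bm v_{-i}) - P_i(v_i',\bm v_{-i}) \mid v_i]$ for all $i, v_i, v_i'$, and satisfies revenue equivalence $\mathbb E[P_i(\bm v) \mid v_i] = z_i(v_i)$ for all $i, v_i$. *)

theory Defs
  imports "HOL-Probability.Probability"
begin

definition bidder_dist :: "(nat \<Rightarrow> real \<Rightarrow> real) \<Rightarrow> (nat \<Rightarrow> real) \<Rightarrow> nat \<Rightarrow> real measure" where
  "bidder_dist f vb i = density (restrict_space lborel {0..vb i}) (\<lambda>x. ennreal (f i x))"

definition profile_dist :: "nat \<Rightarrow> (nat \<Rightarrow> real \<Rightarrow> real) \<Rightarrow> (nat \<Rightarrow> real) \<Rightarrow> (nat \<Rightarrow> real) measure" where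
  "profile_dist n f vb = PiM {..<n} (bidder_dist f vb)"

text \<open>Interim expectation E[X(v) | v_i = u] (values independent across bidders).\<close>
definition interim :: "(nat \<Rightarrow> real) measure \<Rightarrow> ((nat \<Rightarrow> real) \<Rightarrow> real) \<Rightarrow> nat \<Rightarrow> real \<Rightarrow> real" where
  "interim \<Omega> X i u = (\<integral>v. X (v(i := u)) \<partial>\<Omega>)"

definition allocation_rule :: "nat \<Rightarrow> nat \<Rightarrow> (nat \<Rightarrow> real) measure \<Rightarrow> ((nat \<Rightarrow> real) \<Rightarrow> nat \<Rightarrow> real) \<Rightarrow> bool" where
  "allocation_rule n k \<Omega> A \<longleftrightarrow>
     (\<forall>i<n. (\<lambda>v. A v i) \<in> borel_measurable \<Omega>) \<and>
     (\<forall>v\<in>space \<Omega>. (\<forall>i<n. A v i \<in> {0, 1}) \<and> (\<Sum>i<n. A v i) \<le> real k)"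

definition interim_alloc :: "(nat \<Rightarrow> real) measure \<Rightarrow> ((nat \<Rightarrow> real) \<Rightarrow> nat \<Rightarrow> real) \<Rightarrow> nat \<Rightarrow> real \<Rightarrow> real" where
  "interim_alloc \<Omega> A i = interim \<Omega> (\<lambda>v. A v i) i"

definition implementable :: "nat \<Rightarrow> (nat \<Rightarrow> real) \<Rightarrow> (nat \<Rightarrow> real) measure \<Rightarrow> ((nat \<Rightarrow> real) \<Rightarrow> nat \<Rightarrow> real) \<Rightarrow> bool" where
  "implementable n vb \<Omega> A \<longleftrightarrow> (\<forall>i<n. mono_on {0..vb i} (interim_alloc \<Omega> A i))"

definition interim_pay :: "(nat \<Rightarrow> real) measure \<Rightarrow> ((nat \<Rightarrow> real) \<Rightarrow> nat \<Rightarrow> real) \<Rightarrow> nat \<Rightarrow> real \<Rightarrow> real" where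
  "interim_pay \<Omega> A i u = u * interim_alloc \<Omega> A i u - (LINT t:{0..u}|lborel. interim_alloc \<Omega> A i t)"

definition payment_rule :: "nat \<Rightarrow> (nat \<Rightarrow> real) measure \<Rightarrow> ((nat \<Rightarrow> real) \<Rightarrow> nat \<Rightarrow> real) \<Rightarrow> bool" where
  "payment_rule n \<Omega> P \<longleftrightarrow>
     (\<forall>i<n. (\<lambda>v. P v i) \<in> borel_measurable \<Omega>) \<and> (\<forall>v\<in>space \<Omega>. \<forall>i<n. 0 \<le> P v i)"

definition revenue_equiv :: "nat \<Rightarrow> (nat \<Rightarrow> real) \<Rightarrow> (nat \<Rightarrow> real) measure \<Rightarrow> ((nat \<Rightarrow> real) \<Rightarrow> nat \<Rightarrow> real) \<Rightarrow> ((nat \<Rightarrow> real) \<Rightarrow> nat \<Rightarrow> real) \<Rightarrow> bool" where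
  "revenue_equiv n vb \<Omega> A P \<longleftrightarrow>
     (\<forall>i<n. \<forall>u\<in>{0..vb i}. integrable \<Omega> (\<lambda>v. P (v(i := u)) i) \<and>
        interim \<Omega> (\<lambda>v. P v i) i u = interim_pay \<Omega> A i u)"

definition BIC :: "nat \<Rightarrow> (nat \<Rightarrow> real) \<Rightarrow> (nat \<Rightarrow> real) measure \<Rightarrow> ((nat \<Rightarrow> real) \<Rightarrow> nat \<Rightarrow> real) \<Rightarrow> ((nat \<Rightarrow> real) \<Rightarrow> nat \<Rightarrow> real) \<Rightarrow> bool" where
  "BIC n vb \<Omega> A P \<longleftrightarrow>
     (\<forall>i<n. \<forall>u\<in>{0..vb i}. \<forall>u'\<in>{0..vb i}.
        (\<integral>v. u * A (v(i := u')) i - P (v(i := u')) i \<partial>\<Omega>)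
          \<le> (\<integral>v. u * A (v(i := u)) i - P (v(i := u)) i \<partial>\<Omega>))"

definition implements :: "nat \<Rightarrow> (nat \<Rightarrow> real) \<Rightarrow> (nat \<Rightarrow> real) measure \<Rightarrow> ((nat \<Rightarrow> real) \<Rightarrow> nat \<Rightarrow> real) \<Rightarrow> ((nat \<Rightarrow> real) \<Rightarrow> nat \<Rightarrow> real) \<Rightarrow> bool" where
  "implements n vb \<Omega> P A \<longleftrightarrow> payment_rule n \<Omega> P \<and> BIC n vb \<Omega> A P \<and> revenue_equiv n vb \<Omega> A P"

text \<open>P* : some bidder w with maximal pi_w(v_w) (chosen by a fixed measurable tie-breaking
  rule, encoded in Pstar itself) pays pi_w(v_w), everybody else pays 0.\<close>
definition highest_pi_payment :: "nat \<Rightarrow> (nat \<Rightarrow> real) measure \<Rightarrow> (nat \<Rightarrow> real \<Rightarrow> real) \<Rightarrow> ((nat \<Rightarrow> real) \<Rightarrow> nat \<Rightarrow> real) \<Rightarrow> bool" where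
  "highest_pi_payment n \<Omega> \<pi> Pstar \<longleftrightarrow>
     payment_rule n \<Omega> Pstar \<and>
     (\<forall>v\<in>space \<Omega>. \<exists>w<n. (\<forall>j<n. \<pi> j (v j) \<le> \<pi> w (v w)) \<and> Pstar v w = \<pi> w (v w) \<and>
                        (\<forall>j<n. j \<noteq> w \<longrightarrow> Pstar v j = 0))"

end

theory Submission
  imports Defs
begin

text \<open>Write S* and S for the total payments under Pstar and P. Since the winner under Pstar
  pays the largest \<pi>-value, S* = max_j \<pi> j (v j). Revenue equivalence of both rules gives
  E[w(v_j) Pstar_j] = E[w(v_j) P_j] for every bounded weight w of bidder j's own value; taking
  w = \<psi> \<circ> \<pi> j for a bounded monotone \<psi> \<ge> 0 and using \<pi> j (v j) \<le> S*, this yields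
  E[S*] = E[S] and E[\<psi>(S*) S*] \<le> E[\<psi>(S*) S]. For convex g with a bounded right derivative
  g' this means E[g(S)] - E[g(S*)] \<ge> E[g'(S*) (S - S*)] \<ge> 0; a general convex g is reached
  by replacing it by its tangent beyond c and letting c \<rightarrow> \<infinity> (dominated convergence).\<close>

definition right_deriv :: "(real \<Rightarrow> real) \<Rightarrow> real \<Rightarrow> real" where
  "right_deriv g x = Inf ((\<lambda>t. (g x - g t) / (x - t)) ` {x<..})"

lemma convex_on_ge_right_deriv:
  assumes "convex_on UNIV g"
  shows "g x + right_deriv g x * (y - x) \<le> g y"
  using convex_le_Inf_differential[OF assms, of x y] unfolding right_deriv_def by simp

lemma right_deriv_le_slope:
  assumes g: "convex_on UNIV g" and "x < t"
  shows "right_deriv g x \<le> (g x - g t) / (x - t)"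
  unfolding right_deriv_def
proof (rule cInf_lower)
  show "bdd_below ((\<lambda>t. (g x - g t) / (x - t)) ` {x<..})"
  proof (rule bdd_belowI2)
    fix t assume "t \<in> {x<..}"
    then show "(g (x - 1) - g x) / ((x - 1) - x) \<le> (g x - g t) / (x - t)"
      using convex_on_slope_le[OF g, of "x - 1" t x] by auto
  qed
qed (use assms in auto)

lemma right_deriv_mono:
  assumes g: "convex_on UNIV g" and "x \<le> y"
  shows "right_deriv g x \<le> right_deriv g y"
proof (cases "x = y")
  case False
  with assms have xy: "x < y" by auto
  have "right_deriv g x \<le> (g x - g y) / (x - y)" by (rule right_deriv_le_slope[OF g xy])
  also have "\<dots> \<le> right_deriv g y" unfolding right_deriv_def
  proof (rule cInf_greatest)
    fix z assume "z \<in> (\<lambda>t. (g y - g t) / (y - t)) ` {y<..}"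
    then obtain t where t: "y < t" "z = (g y - g t) / (y - t)" by auto
    have "(g x - g y) / (x - y) \<le> (g x - g t) / (x - t)"
      using convex_on_slope_le(1)[OF g, of x t y] xy t by auto
    also have "\<dots> \<le> (g y - g t) / (y - t)"
      using convex_on_slope_le(2)[OF g, of x t y] xy t by auto
    finally show "(g x - g y) / (x - y) \<le> z" using t by simp
  qed auto
  finally show ?thesis .
qed simp

text \<open>Continuing g linearly beyond c bounds its slope on [0, \<infinity>), so that expectations of
  non-negative integrable variables stay finite.\<close>
definition tangent_extension :: "(real \<Rightarrow> real) \<Rightarrow> real \<Rightarrow> real \<Rightarrow> real" where
  "tangent_extension g c x = (if x \<le> c then g x else g c + right_deriv g c * (x - c))"

lemma tangent_extension_ge:
  assumes g: "convex_on UNIV g"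
  shows "tangent_extension g c x + right_deriv g (min x c) * (y - x) \<le> tangent_extension g c y"
proof (cases "x \<le> c"; cases "y \<le> c")
  assume "x \<le> c" "\<not> y \<le> c"
  have "g x + right_deriv g x * (c - x) \<le> g c" by (rule convex_on_ge_right_deriv[OF g])
  moreover have "right_deriv g x * (y - c) \<le> right_deriv g c * (y - c)"
    using right_deriv_mono[OF g \<open>x \<le> c\<close>] \<open>\<not> y \<le> c\<close> by (intro mult_right_mono) auto
  ultimately show ?thesis using \<open>x \<le> c\<close> \<open>\<not> y \<le> c\<close> by (simp add: tangent_extension_def algebra_simps)
qed (use convex_on_ge_right_deriv[OF g] in \<open>auto simp: tangent_extension_def algebra_simps\<close>)

lemma tangent_extension_le: "convex_on UNIV g \<Longrightarrow> tangent_extension g c x \<le> g x"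
  using convex_on_ge_right_deriv[of g c x] by (simp add: tangent_extension_def)

lemma tangent_extension_lower_bound:
  assumes "convex_on UNIV g" and "0 \<le> c"
  shows "g 0 + right_deriv g 0 * x \<le> tangent_extension g c x"
  using tangent_extension_ge[OF assms(1), of c 0 x] assms by (simp add: tangent_extension_def)

lemma tangent_extension_upper_bound:
  assumes g: "convex_on UNIV g" and "0 \<le> c" "0 \<le> x"
  shows "tangent_extension g c x \<le> g 0 + right_deriv g c * x"
proof -
  have "tangent_extension g c x + right_deriv g (min x c) * (0 - x) \<le> tangent_extension g c 0"
    by (rule tangent_extension_ge[OF g])
  moreover have "right_deriv g (min x c) * x \<le> right_deriv g c * x"
    using right_deriv_mono[OF g, of "min x c" c] assms by (intro mult_right_mono) auto
  ultimately show ?thesis using assms by (simp add: tangent_extension_def)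
qed

lemma borel_measurable_tangent_extension:
  assumes "convex_on UNIV g"
  shows "tangent_extension g c \<in> borel_measurable borel"
proof -
  have [measurable]: "g \<in> borel_measurable borel"
    using convex_on_continuous[OF open_UNIV assms] by (rule borel_measurable_continuous_onI)
  show ?thesis unfolding tangent_extension_def by measurable
qed

lemma (in prob_space) integrable_tangent_extension:
  assumes g: "convex_on UNIV g" and X: "integrable M X" "AE x in M. 0 \<le> X x" and c: "0 \<le> c"
  shows "integrable M (\<lambda>x. tangent_extension g c (X x))"
proof (rule Bochner_Integration.integrable_bound)
  let ?r = "\<bar>right_deriv g 0\<bar> + \<bar>right_deriv g c\<bar>"
  show "integrable M (\<lambda>x. \<bar>g 0\<bar> + ?r * X x)"
    using X(1) by (intro Bochner_Integration.integrable_add integrable_mult_right) auto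
  show "(\<lambda>x. tangent_extension g c (X x)) \<in> borel_measurable M"
    using measurable_comp[OF borel_measurable_integrable[OF X(1)] borel_measurable_tangent_extension[OF g]]
    by (simp add: comp_def)
  show "AE x in M. norm (tangent_extension g c (X x)) \<le> norm (\<bar>g 0\<bar> + ?r * X x)"
    using X(2)
  proof eventually_elim
    case (elim x)
    have "\<bar>right_deriv g 0 * X x\<bar> \<le> \<bar>right_deriv g 0\<bar> * X x"
      and "\<bar>right_deriv g c * X x\<bar> \<le> \<bar>right_deriv g c\<bar> * X x"
      using elim by (auto simp: abs_mult)
    moreover have "0 \<le> \<bar>right_deriv g 0\<bar> * X x" "0 \<le> \<bar>right_deriv g c\<bar> * X x"
      using elim by auto
    ultimately have "\<bar>tangent_extension g c (X x)\<bar> \<le> \<bar>g 0\<bar> + ?r * X x"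
      using tangent_extension_lower_bound[OF g c, of "X x"] tangent_extension_upper_bound[OF g c elim]
      by (simp add: abs_le_iff distrib_right) linarith
    then show ?case by simp
  qed
qed

lemma (in prob_space) integrable_bounded_weight:
  fixes X Y :: "'a \<Rightarrow> real" and \<psi> :: "real \<Rightarrow> real"
  assumes Y: "integrable M Y" "AE x in M. 0 \<le> Y x" and X: "X \<in> borel_measurable M"
    and \<psi>: "mono \<psi>" "\<And>t. 0 \<le> \<psi> t \<and> \<psi> t \<le> B"
  shows "integrable M (\<lambda>x. \<psi> (X x) * Y x)"
proof (rule Bochner_Integration.integrable_bound)
  show "integrable M (\<lambda>x. B * Y x)" using Y(1) by simp
  have "\<psi> \<in> borel_measurable borel" by (rule borel_measurable_mono[OF \<psi>(1)])
  then show "(\<lambda>x. \<psi> (X x) * Y x) \<in> borel_measurable M"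
    using X borel_measurable_integrable[OF Y(1)] by measurable
  show "AE x in M. norm (\<psi> (X x) * Y x) \<le> norm (B * Y x)"
    using Y(2)
  proof eventually_elim
    case (elim x)
    have "\<psi> (X x) * Y x \<le> B * Y x" using \<psi>(2) elim by (intro mult_right_mono) auto
    then show ?case using \<psi>(2)[of "X x"] elim by simp
  qed
qed

locale monotone_weight_dominance = prob_space +
  fixes X Y :: "'a \<Rightarrow> real"
  assumes integrable_X: "integrable M X" and integrable_Y: "integrable M Y"
    and nonneg_X: "AE x in M. 0 \<le> X x" and nonneg_Y: "AE x in M. 0 \<le> Y x"
    and expectation_eq: "expectation X = expectation Y"
    and weighted_le: "\<And>\<psi> B. mono \<psi> \<Longrightarrow> (\<And>t. 0 \<le> \<psi> t \<and> \<psi> t \<le> B) \<Longrightarrow>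
      (\<integral>x. \<psi> (X x) * X x \<partial>M) \<le> (\<integral>x. \<psi> (X x) * Y x \<partial>M)"
begin

lemma expectation_tangent_extension_le:
  assumes g: "convex_on UNIV g" and c: "0 \<le> c"
  shows "expectation (\<lambda>x. tangent_extension g c (X x)) \<le> expectation (\<lambda>x. tangent_extension g c (Y x))"
proof -
  define r0 where "r0 = right_deriv g 0"
  define \<psi> where "\<psi> t = right_deriv g (max 0 (min t c)) - r0" for t
  have \<psi>_mono: "mono \<psi>"
    unfolding mono_def \<psi>_def by (auto intro!: right_deriv_mono[OF g])
  have \<psi>_bounds: "0 \<le> \<psi> t \<and> \<psi> t \<le> right_deriv g c - r0" for t
    unfolding \<psi>_def r0_def using c by (auto intro!: right_deriv_mono[OF g])
  have X_meas: "X \<in> borel_measurable M" by (rule borel_measurable_integrable[OF integrable_X])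
  note integrable_weight = integrable_bounded_weight[OF _ _ X_meas \<psi>_mono \<psi>_bounds]
  have int_X: "integrable M (\<lambda>x. \<psi> (X x) * X x)"
    and int_Y: "integrable M (\<lambda>x. \<psi> (X x) * Y x)"
    using integrable_weight integrable_X integrable_Y nonneg_X nonneg_Y by auto
  have int_tX: "integrable M (\<lambda>x. tangent_extension g c (X x))"
    and int_tY: "integrable M (\<lambda>x. tangent_extension g c (Y x))"
    using integrable_tangent_extension[OF g _ _ c] integrable_X integrable_Y nonneg_X nonneg_Y by auto
  have "expectation (\<lambda>x. tangent_extension g c (X x))
      = expectation (\<lambda>x. tangent_extension g c (X x))
        + ((\<integral>x. \<psi> (X x) * X x \<partial>M) - (\<integral>x. \<psi> (X x) * X x \<partial>M)) + r0 * (expectation Y - expectation X)"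
    using expectation_eq by simp
  also have "\<dots> \<le> expectation (\<lambda>x. tangent_extension g c (X x))
        + ((\<integral>x. \<psi> (X x) * Y x \<partial>M) - (\<integral>x. \<psi> (X x) * X x \<partial>M)) + r0 * (expectation Y - expectation X)"
    using weighted_le[OF \<psi>_mono \<psi>_bounds] by simp
  also have "\<dots> = expectation (\<lambda>x. tangent_extension g c (X x) + (\<psi> (X x) * Y x - \<psi> (X x) * X x) + r0 * (Y x - X x))"
    using int_X int_Y int_tX integrable_X integrable_Y by simp
  also have "\<dots> \<le> expectation (\<lambda>x. tangent_extension g c (Y x))"
  proof (rule integral_mono_AE)
    show "integrable M (\<lambda>x. tangent_extension g c (X x) + (\<psi> (X x) * Y x - \<psi> (X x) * X x) + r0 * (Y x - X x))"
      using int_X int_Y int_tX integrable_X integrable_Y by auto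
    show "AE x in M. tangent_extension g c (X x) + (\<psi> (X x) * Y x - \<psi> (X x) * X x) + r0 * (Y x - X x)
        \<le> tangent_extension g c (Y x)"
      using nonneg_X
    proof eventually_elim
      case (elim x)
      have "right_deriv g (min (X x) c) = \<psi> (X x) + r0" using elim c by (simp add: \<psi>_def)
      then show ?case using tangent_extension_ge[OF g, of c "X x" "Y x"] by (simp add: algebra_simps)
    qed
  qed (rule int_tY)
  finally show ?thesis .
qed

theorem convex_expectation_le:
  assumes g: "convex_on UNIV g"
    and int_gX: "integrable M (\<lambda>x. g (X x))" and int_gY: "integrable M (\<lambda>x. g (Y x))"
  shows "expectation (\<lambda>x. g (X x)) \<le> expectation (\<lambda>x. g (Y x))"
proof (rule LIMSEQ_le_const2)
  let ?r0 = "\<bar>right_deriv g 0\<bar>"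
  show "(\<lambda>N. expectation (\<lambda>x. tangent_extension g (real N) (X x))) \<longlonglongrightarrow> expectation (\<lambda>x. g (X x))"
  proof (rule integral_dominated_convergence[where w="\<lambda>x. \<bar>g (X x)\<bar> + \<bar>g 0\<bar> + ?r0 * X x"])
    show "integrable M (\<lambda>x. \<bar>g (X x)\<bar> + \<bar>g 0\<bar> + ?r0 * X x)"
      using int_gX integrable_X by (intro Bochner_Integration.integrable_add integrable_mult_right) auto
    show "(\<lambda>x. g (X x)) \<in> borel_measurable M" by (rule borel_measurable_integrable[OF int_gX])
    show "(\<lambda>x. tangent_extension g (real N) (X x)) \<in> borel_measurable M" for N
      using integrable_tangent_extension[OF g integrable_X nonneg_X, of "real N"] by simp
    show "AE x in M. (\<lambda>N. tangent_extension g (real N) (X x)) \<longlonglongrightarrow> g (X x)"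
    proof (rule AE_I2)
      fix x
      obtain N0 :: nat where "X x \<le> real N0" using real_arch_simple by blast
      then have "\<forall>N\<ge>N0. tangent_extension g (real N) (X x) = g (X x)"
        by (auto simp: tangent_extension_def)
      then show "(\<lambda>N. tangent_extension g (real N) (X x)) \<longlonglongrightarrow> g (X x)"
        by (intro tendsto_eventually) (auto simp: eventually_sequentially)
    qed
    show "AE x in M. norm (tangent_extension g (real N) (X x)) \<le> \<bar>g (X x)\<bar> + \<bar>g 0\<bar> + ?r0 * X x" for N
      using nonneg_X
    proof eventually_elim
      case (elim x)
      have "\<bar>right_deriv g 0 * X x\<bar> \<le> ?r0 * X x" using elim by (auto simp: abs_mult)
      then show ?case
        using tangent_extension_lower_bound[OF g, of "real N" "X x"] tangent_extension_le[OF g, of "real N" "X x"]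
        by (auto simp: abs_le_iff)
    qed
  qed
  show "\<exists>N0. \<forall>N\<ge>N0. expectation (\<lambda>x. tangent_extension g (real N) (X x)) \<le> expectation (\<lambda>x. g (Y x))"
  proof (intro exI allI impI)
    fix N :: nat
    have "expectation (\<lambda>x. tangent_extension g (real N) (X x))
        \<le> expectation (\<lambda>x. tangent_extension g (real N) (Y x))"
      by (rule expectation_tangent_extension_le[OF g]) simp
    also have "\<dots> \<le> expectation (\<lambda>x. g (Y x))"
      using integrable_tangent_extension[OF g integrable_Y nonneg_Y, of "real N"] int_gY
      by (intro integral_mono) (auto intro: tangent_extension_le[OF g])
    finally show "expectation (\<lambda>x. tangent_extension g (real N) (X x)) \<le> expectation (\<lambda>x. g (Y x))" .
  qed
qed

end

lemma nn_integral_PiM_fun_upd: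
  fixes X :: "('i \<Rightarrow> 'a) \<Rightarrow> ennreal"
  assumes I: "finite I" "i \<in> I" and M: "\<And>j. j \<in> I \<Longrightarrow> prob_space (M j)"
    and X: "X \<in> borel_measurable (PiM I M)"
  shows "(\<integral>\<^sup>+v. X v \<partial>PiM I M) = (\<integral>\<^sup>+u. (\<integral>\<^sup>+v. X (v(i := u)) \<partial>PiM I M) \<partial>M i)"
proof -
  define M' where "M' j = (if j \<in> I then M j else M i)" for j
  have PiM_eq: "PiM I M = PiM I M'" by (rule PiM_cong) (auto simp: M'_def)
  have M'_i: "M' i = M i" using I by (simp add: M'_def)
  have prob_M': "prob_space (M' j)" for j using M I by (auto simp: M'_def)
  interpret product_sigma_finite M'
    unfolding product_sigma_finite_def using prob_M' by (simp add: prob_space_imp_sigma_finite)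
  define J where "J = I - {i}"
  have IJ: "I = insert i J" "finite J" "i \<notin> J" using I by (auto simp: J_def)
  have X': "X \<in> borel_measurable (PiM (insert i J) M')" using X PiM_eq IJ by simp
  have "(\<integral>\<^sup>+v. X v \<partial>PiM I M) = (\<integral>\<^sup>+u. (\<integral>\<^sup>+v. X (v(i := u)) \<partial>PiM J M') \<partial>M' i)"
    using product_nn_integral_insert_rev[OF IJ(2,3) X'] PiM_eq IJ(1) by simp
  also have "\<dots> = (\<integral>\<^sup>+u. (\<integral>\<^sup>+v. X (v(i := u)) \<partial>PiM I M) \<partial>M' i)"
  proof (rule nn_integral_cong)
    fix u assume u: "u \<in> space (M' i)"
    have "(\<lambda>v. v(i := u)) \<in> PiM (insert i J) M' \<rightarrow>\<^sub>M PiM (insert i J) M'"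
      using u by (intro measurable_fun_upd[where J="insert i J"]) auto
    from measurable_comp[OF this X']
    have X_u: "(\<lambda>v. X (v(i := u))) \<in> borel_measurable (PiM (insert i J) M')" by (simp add: comp_def)
    have "(\<integral>\<^sup>+v. X (v(i := u)) \<partial>PiM I M)
        = (\<integral>\<^sup>+y. (\<integral>\<^sup>+v. X (v(i := y, i := u)) \<partial>PiM J M') \<partial>M' i)"
      using product_nn_integral_insert_rev[OF IJ(2,3) X_u] PiM_eq IJ(1) by simp
    also have "\<dots> = (\<integral>\<^sup>+v. X (v(i := u)) \<partial>PiM J M')"
      using prob_space.emeasure_space_1[OF prob_M'[of i]] by simp
    finally show "(\<integral>\<^sup>+v. X (v(i := u)) \<partial>PiM J M') = (\<integral>\<^sup>+v. X (v(i := u)) \<partial>PiM I M)" by simp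
  qed
  finally show ?thesis unfolding M'_i .
qed

locale value_distribution =
  fixes n :: nat and f :: "nat \<Rightarrow> real \<Rightarrow> real" and vb :: "nat \<Rightarrow> real"
  assumes density_measurable: "\<forall>i<n. f i \<in> borel_measurable lborel"
    and density_normalized: "\<forall>i<n. (\<integral>\<^sup>+x\<in>{0..vb i}. ennreal (f i x) \<partial>lborel) = 1"
begin

abbreviation "\<mu> \<equiv> bidder_dist f vb"
abbreviation "\<Omega> \<equiv> profile_dist n f vb"

lemma space_bidder_dist [simp]: "space (\<mu> i) = {0..vb i}"
  by (simp add: bidder_dist_def)

lemma prob_space_bidder_dist:
  assumes "i < n"
  shows "prob_space (\<mu> i)"
proof (rule prob_spaceI)
  have "f i \<in> borel_measurable (restrict_space lborel {0..vb i})"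
    using density_measurable assms by (intro measurable_restrict_space1) auto
  then have "emeasure (\<mu> i) (space (\<mu> i))
      = (\<integral>\<^sup>+x. ennreal (f i x) * indicator {0..vb i} x \<partial>restrict_space lborel {0..vb i})"
    unfolding bidder_dist_def
    by (subst emeasure_density) (auto simp: space_restrict_space sets_restrict_space_iff)
  also have "\<dots> = (\<integral>\<^sup>+x\<in>{0..vb i}. ennreal (f i x) \<partial>lborel)"
    by (subst nn_integral_restrict_space) (auto intro!: nn_integral_cong simp: indicator_def)
  also have "\<dots> = 1" using density_normalized assms by auto
  finally show "emeasure (\<mu> i) (space (\<mu> i)) = 1" .
qed

lemma prob_space_profile_dist: "prob_space \<Omega>"
  unfolding profile_dist_def by (rule prob_space_PiM) (use prob_space_bidder_dist in auto)

lemma space_profile_dist: "space \<Omega> = PiE {..<n} (\<lambda>i. {0..vb i})"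
  by (simp add: profile_dist_def space_PiM)

lemma fun_upd_in_space_profile_dist:
  "v \<in> space \<Omega> \<Longrightarrow> i < n \<Longrightarrow> u \<in> {0..vb i} \<Longrightarrow> v(i := u) \<in> space \<Omega>"
  by (auto simp: space_profile_dist PiE_iff extensional_def)

lemma component_in_space_bidder_dist: "v \<in> space \<Omega> \<Longrightarrow> i < n \<Longrightarrow> v i \<in> {0..vb i}"
  by (auto simp: space_profile_dist PiE_iff)

lemma measurable_component_profile_dist: "i < n \<Longrightarrow> (\<lambda>v. v i) \<in> \<Omega> \<rightarrow>\<^sub>M \<mu> i"
  unfolding profile_dist_def by (rule measurable_component_singleton) auto

lemma measurable_fun_upd_profile_dist:
  assumes "F \<in> borel_measurable \<Omega>" "i < n" "u \<in> {0..vb i}"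
  shows "(\<lambda>v. F (v(i := u))) \<in> borel_measurable \<Omega>"
proof -
  have "(\<lambda>v. v(i := u)) \<in> \<Omega> \<rightarrow>\<^sub>M \<Omega>"
    unfolding profile_dist_def using assms(2,3) by (intro measurable_fun_upd[where J="{..<n}"]) auto
  from measurable_comp[OF this assms(1)] show ?thesis by (simp add: comp_def)
qed

lemma nn_integral_profile_dist_fun_upd:
  fixes X :: "(nat \<Rightarrow> real) \<Rightarrow> ennreal"
  assumes "i < n" "X \<in> borel_measurable \<Omega>"
  shows "(\<integral>\<^sup>+v. X v \<partial>\<Omega>) = (\<integral>\<^sup>+u. (\<integral>\<^sup>+v. X (v(i := u)) \<partial>\<Omega>) \<partial>\<mu> i)"
  using nn_integral_PiM_fun_upd[of "{..<n}" i \<mu> X] assms prob_space_bidder_dist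
  unfolding profile_dist_def by auto

lemma interim_alloc_bounds:
  assumes A: "allocation_rule n k \<Omega> A" and i: "i < n" and t: "t \<in> {0..vb i}"
  shows "0 \<le> interim_alloc \<Omega> A i t" "interim_alloc \<Omega> A i t \<le> 1"
proof -
  interpret prob_space \<Omega> by (rule prob_space_profile_dist)
  have "(\<lambda>v. A v i) \<in> borel_measurable \<Omega>" using A i by (auto simp: allocation_rule_def)
  then have meas: "(\<lambda>v. A (v(i := t)) i) \<in> borel_measurable \<Omega>"
    by (rule measurable_fun_upd_profile_dist[OF _ i t])
  have range: "AE v in \<Omega>. A (v(i := t)) i \<in> {0, 1}"
    using A i t fun_upd_in_space_profile_dist by (auto simp: allocation_rule_def intro!: AE_I2)
  have "integrable \<Omega> (\<lambda>v. A (v(i := t)) i)"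
    by (rule integrable_const_bound[where B=1]) (use range meas in auto)
  then show "0 \<le> interim_alloc \<Omega> A i t" "interim_alloc \<Omega> A i t \<le> 1"
    unfolding interim_alloc_def interim_def
    using range by (auto intro!: integral_nonneg_AE integral_le_const)
qed

lemma interim_pay_le:
  assumes A: "allocation_rule n k \<Omega> A" and i: "i < n" and u: "u \<in> {0..vb i}"
  shows "interim_pay \<Omega> A i u \<le> vb i"
proof -
  have "0 \<le> (LINT t:{0..u}|lborel. interim_alloc \<Omega> A i t)"
    unfolding set_lebesgue_integral_def using interim_alloc_bounds(1)[OF A i] u
    by (intro integral_nonneg_AE) (auto simp: indicator_def)
  moreover have "u * interim_alloc \<Omega> A i u \<le> u * 1"
    using interim_alloc_bounds[OF A i u] u by (intro mult_left_mono) auto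
  ultimately show ?thesis using u by (simp add: interim_pay_def)
qed

lemma nn_integral_weighted_payment:
  assumes Q: "payment_rule n \<Omega> Q" "revenue_equiv n vb \<Omega> A Q" and j: "j < n"
    and w: "w \<in> borel_measurable (\<mu> j)" "\<forall>u\<in>{0..vb j}. 0 \<le> w u"
  shows "(\<integral>\<^sup>+v. ennreal (w (v j) * Q v j) \<partial>\<Omega>)
    = (\<integral>\<^sup>+u. ennreal (w u) * ennreal (interim_pay \<Omega> A j u) \<partial>\<mu> j)"
proof -
  have Q_meas: "(\<lambda>v. Q v j) \<in> borel_measurable \<Omega>" using Q j by (auto simp: payment_rule_def)
  have "(\<lambda>v. w (v j)) \<in> borel_measurable \<Omega>"
    using measurable_comp[OF measurable_component_profile_dist[OF j] w(1)] by (simp add: comp_def)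
  then have "(\<lambda>v. ennreal (w (v j) * Q v j)) \<in> borel_measurable \<Omega>" using Q_meas by measurable
  then have "(\<integral>\<^sup>+v. ennreal (w (v j) * Q v j) \<partial>\<Omega>)
      = (\<integral>\<^sup>+u. (\<integral>\<^sup>+v. ennreal (w u * Q (v(j := u)) j) \<partial>\<Omega>) \<partial>\<mu> j)"
    by (simp add: nn_integral_profile_dist_fun_upd[OF j])
  also have "\<dots> = (\<integral>\<^sup>+u. ennreal (w u) * ennreal (interim_pay \<Omega> A j u) \<partial>\<mu> j)"
  proof (rule nn_integral_cong)
    fix u assume "u \<in> space (\<mu> j)"
    then have u: "u \<in> {0..vb j}" by simp
    have nonneg: "\<forall>v\<in>space \<Omega>. 0 \<le> Q (v(j := u)) j"
      using Q(1) j u fun_upd_in_space_profile_dist by (auto simp: payment_rule_def)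
    have "integrable \<Omega> (\<lambda>v. Q (v(j := u)) j)" "(\<integral>v. Q (v(j := u)) j \<partial>\<Omega>) = interim_pay \<Omega> A j u"
      using Q(2) j u by (auto simp: revenue_equiv_def interim_def)
    then have "(\<integral>\<^sup>+v. ennreal (Q (v(j := u)) j) \<partial>\<Omega>) = ennreal (interim_pay \<Omega> A j u)"
      using nonneg by (subst nn_integral_eq_integral) auto
    moreover have "(\<integral>\<^sup>+v. ennreal (w u * Q (v(j := u)) j) \<partial>\<Omega>)
        = ennreal (w u) * (\<integral>\<^sup>+v. ennreal (Q (v(j := u)) j) \<partial>\<Omega>)"
      using w(2) u measurable_fun_upd_profile_dist[OF Q_meas j u]
      by (subst nn_integral_cmult[symmetric]) (auto intro!: nn_integral_cong simp: ennreal_mult')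
    ultimately show "(\<integral>\<^sup>+v. ennreal (w u * Q (v(j := u)) j) \<partial>\<Omega>)
        = ennreal (w u) * ennreal (interim_pay \<Omega> A j u)" by simp
  qed
  finally show ?thesis .
qed

lemma weighted_payment:
  assumes A: "allocation_rule n k \<Omega> A"
    and Q: "payment_rule n \<Omega> Q" "revenue_equiv n vb \<Omega> A Q" and j: "j < n"
    and w: "w \<in> borel_measurable (\<mu> j)" "\<forall>u\<in>{0..vb j}. 0 \<le> w u \<and> w u \<le> B"
  shows "integrable \<Omega> (\<lambda>v. w (v j) * Q v j)"
    and "(\<integral>v. w (v j) * Q v j \<partial>\<Omega>)
      = enn2real (\<integral>\<^sup>+u. ennreal (w u) * ennreal (interim_pay \<Omega> A j u) \<partial>\<mu> j)"
proof -
  interpret bidder: prob_space "\<mu> j" by (rule prob_space_bidder_dist[OF j])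
  have meas: "(\<lambda>v. w (v j) * Q v j) \<in> borel_measurable \<Omega>"
    using measurable_comp[OF measurable_component_profile_dist[OF j] w(1)] Q(1) j
    by (auto simp: comp_def payment_rule_def)
  have nonneg: "AE v in \<Omega>. 0 \<le> w (v j) * Q v j"
    using Q(1) j w(2) component_in_space_bidder_dist by (auto simp: payment_rule_def intro!: AE_I2)
  note eq = nn_integral_weighted_payment[OF Q j w(1)]
  have "(\<integral>\<^sup>+u. ennreal (w u) * ennreal (interim_pay \<Omega> A j u) \<partial>\<mu> j) \<le> (\<integral>\<^sup>+u. ennreal B * ennreal (vb j) \<partial>\<mu> j)"
    using w(2) interim_pay_le[OF A j] by (intro nn_integral_mono mult_mono ennreal_leI) auto
  also have "\<dots> < \<infinity>"
    using bidder.emeasure_space_1 by (simp del: space_bidder_dist add: ennreal_mult_less_top)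
  finally show "integrable \<Omega> (\<lambda>v. w (v j) * Q v j)"
    using eq w(2) by (intro integrableI_nonneg[OF meas nonneg]) auto
  show "(\<integral>v. w (v j) * Q v j \<partial>\<Omega>)
      = enn2real (\<integral>\<^sup>+u. ennreal (w u) * ennreal (interim_pay \<Omega> A j u) \<partial>\<mu> j)"
    using eq w(2) by (subst integral_eq_nn_integral[OF meas nonneg]) auto
qed

end

locale highest_pi_comparison = value_distribution +
  fixes k :: nat and A P Pstar :: "(nat \<Rightarrow> real) \<Rightarrow> nat \<Rightarrow> real" and \<pi> :: "nat \<Rightarrow> real \<Rightarrow> real"
  assumes allocation: "allocation_rule n k (profile_dist n f vb) A"
    and \<pi>_measurable: "\<forall>i<n. \<pi> i \<in> borel_measurable (bidder_dist f vb i)"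
    and highest_pi: "highest_pi_payment n (profile_dist n f vb) \<pi> Pstar"
    and revenue_equiv_Pstar: "revenue_equiv n vb (profile_dist n f vb) A Pstar"
    and payment_P: "payment_rule n (profile_dist n f vb) P"
    and revenue_equiv_P: "revenue_equiv n vb (profile_dist n f vb) A P"
begin

lemma payment_Pstar: "payment_rule n \<Omega> Pstar"
  using highest_pi by (simp add: highest_pi_payment_def)

lemma weighted_payment_eq:
  assumes j: "j < n" and w: "w \<in> borel_measurable (\<mu> j)" "\<forall>u\<in>{0..vb j}. 0 \<le> w u \<and> w u \<le> B"
  shows "integrable \<Omega> (\<lambda>v. w (v j) * P v j)" "integrable \<Omega> (\<lambda>v. w (v j) * Pstar v j)"
    "(\<integral>v. w (v j) * P v j \<partial>\<Omega>) = (\<integral>v. w (v j) * Pstar v j \<partial>\<Omega>)"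
  using weighted_payment[OF allocation payment_P revenue_equiv_P j w]
    weighted_payment[OF allocation payment_Pstar revenue_equiv_Pstar j w] by auto

lemma integrable_payment: "j < n \<Longrightarrow> integrable \<Omega> (\<lambda>v. P v j)"
  and integrable_payment_Pstar: "j < n \<Longrightarrow> integrable \<Omega> (\<lambda>v. Pstar v j)"
  using weighted_payment_eq[of j "\<lambda>_. 1" 1] by auto

lemma sum_highest_pi_payment:
  assumes "v \<in> space \<Omega>"
  obtains w where "w < n" "(\<Sum>i<n. Pstar v i) = \<pi> w (v w)"
    "\<forall>j<n. \<pi> j (v j) \<le> (\<Sum>i<n. Pstar v i)" "\<forall>j<n. j \<noteq> w \<longrightarrow> Pstar v j = 0"
proof -
  obtain w where w: "w < n" "\<forall>j<n. \<pi> j (v j) \<le> \<pi> w (v w)" "Pstar v w = \<pi> w (v w)"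
    "\<forall>j<n. j \<noteq> w \<longrightarrow> Pstar v j = 0"
    using highest_pi assms unfolding highest_pi_payment_def by blast
  have "(\<Sum>i<n. Pstar v i) = Pstar v w"
    using w(1,4) by (intro sum.remove[THEN trans]) auto
  with w that show ?thesis by simp
qed

lemma weighted_total_payment_le:
  assumes \<psi>: "mono \<psi>" "\<And>t. 0 \<le> \<psi> t \<and> \<psi> t \<le> B"
  shows "(\<integral>v. \<psi> (\<Sum>i<n. Pstar v i) * (\<Sum>i<n. Pstar v i) \<partial>\<Omega>)
    \<le> (\<integral>v. \<psi> (\<Sum>i<n. Pstar v i) * (\<Sum>i<n. P v i) \<partial>\<Omega>)"
proof -
  interpret prob_space \<Omega> by (rule prob_space_profile_dist)
  let ?S = "\<lambda>v. \<Sum>i<n. Pstar v i"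
  have S_meas: "?S \<in> borel_measurable \<Omega>"
    using payment_Pstar by (auto simp: payment_rule_def intro!: borel_measurable_sum)
  have integrable_weight: "integrable \<Omega> (\<lambda>v. \<psi> (?S v) * Q v j)"
    if "j < n" "payment_rule n \<Omega> Q" "integrable \<Omega> (\<lambda>v. Q v j)" for Q j
    using that by (intro integrable_bounded_weight[OF _ _ S_meas \<psi>]) (auto simp: payment_rule_def)
  have int_P: "integrable \<Omega> (\<lambda>v. \<psi> (?S v) * P v j)"
    and int_Pstar: "integrable \<Omega> (\<lambda>v. \<psi> (?S v) * Pstar v j)" if "j < n" for j
    using integrable_weight that payment_P payment_Pstar integrable_payment integrable_payment_Pstar by auto
  have bidder_le: "(\<integral>v. \<psi> (?S v) * Pstar v j \<partial>\<Omega>) \<le> (\<integral>v. \<psi> (?S v) * P v j \<partial>\<Omega>)"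
    if j: "j < n" for j
  proof -
    have "\<psi> \<circ> \<pi> j \<in> borel_measurable (\<mu> j)"
      using \<pi>_measurable j borel_measurable_mono[OF \<psi>(1)] by auto
    note eq = weighted_payment_eq[OF j this, of B]
    have "(\<integral>v. \<psi> (?S v) * Pstar v j \<partial>\<Omega>) = (\<integral>v. \<psi> (\<pi> j (v j)) * Pstar v j \<partial>\<Omega>)"
    proof (rule Bochner_Integration.integral_cong[OF refl])
      fix v assume "v \<in> space \<Omega>"
      then obtain w where "(\<Sum>i<n. Pstar v i) = \<pi> w (v w)" "\<forall>j<n. j \<noteq> w \<longrightarrow> Pstar v j = 0"
        by (rule sum_highest_pi_payment)
      then show "\<psi> (?S v) * Pstar v j = \<psi> (\<pi> j (v j)) * Pstar v j" using j by (cases "j = w") auto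
    qed
    also have "\<dots> = (\<integral>v. \<psi> (\<pi> j (v j)) * P v j \<partial>\<Omega>)" using eq \<psi>(2) by simp
    also have "\<dots> \<le> (\<integral>v. \<psi> (?S v) * P v j \<partial>\<Omega>)"
    proof (rule integral_mono)
      show "integrable \<Omega> (\<lambda>v. \<psi> (\<pi> j (v j)) * P v j)" using eq \<psi>(2) by simp
      fix v assume v: "v \<in> space \<Omega>"
      then obtain w where "\<forall>j<n. \<pi> j (v j) \<le> ?S v" by (rule sum_highest_pi_payment)
      then have "\<psi> (\<pi> j (v j)) \<le> \<psi> (?S v)" using \<psi>(1) j by (auto simp: mono_def)
      then show "\<psi> (\<pi> j (v j)) * P v j \<le> \<psi> (?S v) * P v j"
        using payment_P j v by (intro mult_right_mono) (auto simp: payment_rule_def)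
    qed (rule int_P[OF j])
    finally show ?thesis .
  qed
  have "(\<integral>v. \<psi> (?S v) * ?S v \<partial>\<Omega>) = (\<Sum>j<n. \<integral>v. \<psi> (?S v) * Pstar v j \<partial>\<Omega>)"
    using int_Pstar by (simp add: sum_distrib_left integral_sum)
  also have "\<dots> \<le> (\<Sum>j<n. \<integral>v. \<psi> (?S v) * P v j \<partial>\<Omega>)"
    using bidder_le by (intro sum_mono) auto
  also have "\<dots> = (\<integral>v. \<psi> (?S v) * (\<Sum>i<n. P v i) \<partial>\<Omega>)"
    using int_P by (simp add: sum_distrib_left integral_sum)
  finally show ?thesis .
qed

sublocale total_payment: monotone_weight_dominance \<Omega> "\<lambda>v. \<Sum>i<n. Pstar v i" "\<lambda>v. \<Sum>i<n. P v i"
proof (intro monotone_weight_dominance.intro prob_space_profile_dist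
    monotone_weight_dominance_axioms.intro)
  show "integrable \<Omega> (\<lambda>v. \<Sum>i<n. Pstar v i)" "integrable \<Omega> (\<lambda>v. \<Sum>i<n. P v i)"
    using integrable_payment integrable_payment_Pstar by auto
  show "AE v in \<Omega>. 0 \<le> (\<Sum>i<n. Pstar v i)" "AE v in \<Omega>. 0 \<le> (\<Sum>i<n. P v i)"
    using payment_Pstar payment_P by (auto simp: payment_rule_def intro!: AE_I2 sum_nonneg)
  show "(\<integral>v. (\<Sum>i<n. Pstar v i) \<partial>\<Omega>) = (\<integral>v. (\<Sum>i<n. P v i) \<partial>\<Omega>)"
    using weighted_payment_eq[of _ "\<lambda>_. 1" 1] by (simp add: integral_sum)
qed (rule weighted_total_payment_le)

end

theorem mainTheorem9:
  fixes n k :: nat and f :: "nat \<Rightarrow> real \<Rightarrow> real" and vb :: "nat \<Rightarrow> real"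
    and A Pstar P :: "(nat \<Rightarrow> real) \<Rightarrow> nat \<Rightarrow> real"
    and \<pi> :: "nat \<Rightarrow> real \<Rightarrow> real" and g :: "real \<Rightarrow> real"
  defines "\<Omega> \<equiv> profile_dist n f vb"
  assumes "1 \<le> k" and "k < n"
    and "\<forall>i<n. 0 < vb i"
    and "\<forall>i<n. f i \<in> borel_measurable lborel"
    and "\<forall>i<n. \<forall>x\<in>{0..vb i}. 0 < f i x"
    and "\<forall>i<n. (\<integral>\<^sup>+x\<in>{0..vb i}. ennreal (f i x) \<partial>lborel) = 1"
    and "allocation_rule n k \<Omega> A"
    and "implementable n vb \<Omega> A"
    and "\<forall>i<n. \<pi> i \<in> borel_measurable (bidder_dist f vb i)"
    and "\<forall>i<n. \<forall>x\<in>{0..vb i}. 0 \<le> \<pi> i x"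
    and "highest_pi_payment n \<Omega> \<pi> Pstar"
    and "revenue_equiv n vb \<Omega> A Pstar"
    and "convex_on UNIV g"
    and "implements n vb \<Omega> P A"
    and "integrable \<Omega> (\<lambda>v. g (\<Sum>i<n. Pstar v i))"
    and "integrable \<Omega> (\<lambda>v. g (\<Sum>i<n. P v i))"
  shows "(\<integral>v. g (\<Sum>i<n. Pstar v i) \<partial>\<Omega>) \<le> (\<integral>v. g (\<Sum>i<n. P v i) \<partial>\<Omega>)"
proof -
  interpret highest_pi_comparison n f vb k A P Pstar \<pi>
    using assms unfolding \<Omega>_def implements_def by unfold_locales auto
  show ?thesis
    using total_payment.convex_expectation_le assms(14,16,17) unfolding \<Omega>_def by blast
qed

end
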